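(* Let $r,M$ be positive integers with $M\ge2$, and let $\mathcal C=\{0,\dots,M-1\}^r\subset\mathbb Z^r$. Let $\tau=\tau_M$ be the (positive) solution of $$\left(\frac1M\right)^{2\tau}+\left(\frac{M-1}{M}\right)^{\tau}=1.$$ Then for any subsets $A,B\subset\mathcal C$ we have $|A+B|\ge(|A||B|)^\tau$.
   Context: $A+B=\{a+b: a\in A, b\in B\}$, computed in $\mathbb Z^r$. *)

theory Defs
  imports "HOL-Analysis.Analysis"
begin

definition sumset :: "('a::plus) set \<Rightarrow> 'a set \<Rightarrow> 'a set" where
  "sumset A B = {a + b | a b. a \<in> A \<and> b \<in> B}"

definition cube :: "int \<Rightarrow> (int ^ 'r) set" where
  "cube M = {x. \<forall>i. 0 \<le> x $ i \<and> x $ i < M}"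

end

theory Submission
  imports Defs
begin

(* Compressing A and B along a coordinate k -- replacing every line of a set in direction k
   by an initial segment {0, ..., n - 1} of the same length -- keeps |A| and |B| and does not
   increase |A + B|, by the one-dimensional bound |X + Y| >= |X| + |Y| - 1 applied line by line.
   For compressed sets let A0, B0 be the points with x_k = 0 and A1 the rest of A.  Then A0 + B0
   and A1 + B are disjoint parts of A + B, and |A| <= M |A0| since every nonempty line meets
   x_k = 0.  If x = |A0| / |A| <= |B0| / |B|, induction on |A| + |B| gives
     |A + B| >= (|A0| |B0|)^tau + (|A1| |B|)^tau >= (x^(2 tau) + (1 - x)^tau) (|A| |B|)^tau,
   and x^(2 tau) + (1 - x)^tau >= 1 for 1/M <= x <= 1 by the choice of tau; the other ratio
   order is symmetric.  If both compressed sets lie in x_k = 0, then k has left the set of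
   coordinates on which they are not identically zero, and the induction runs on that set. *)

section \<open>An inequality for the exponent\<close>

definition phi :: "real \<Rightarrow> real \<Rightarrow> real" where
  "phi t x = x powr (2 * t) + (1 - x) powr t"

definition phi_deriv :: "real \<Rightarrow> real \<Rightarrow> real" where
  "phi_deriv t x = 2 * t * x powr (2 * t - 1) - t * (1 - x) powr (t - 1)"

(* psi t x = ln (2 x^(2t-1) / (1-x)^(t-1)), the log-ratio of the two terms of phi_deriv t x / t. *)
definition psi :: "real \<Rightarrow> real \<Rightarrow> real" where
  "psi t x = ln 2 + (2 * t - 1) * ln x + (1 - t) * ln (1 - x)"

lemma has_real_derivative_phi:
  assumes "0 < x" "x < 1"
  shows "(phi t has_real_derivative phi_deriv t x) (at x)"
proof -
  have first: "((\<lambda>x. x powr (2 * t)) has_real_derivative 2 * t * x powr (2 * t - 1)) (at x)"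
    using has_real_derivative_powr[OF assms(1)] by simp
  have inner: "((\<lambda>x. 1 - x) has_real_derivative -1) (at x)"
    by (auto intro!: derivative_eq_intros)
  have second: "((\<lambda>x. (1 - x) powr t) has_real_derivative t * (1 - x) powr (t - 1) * -1) (at x)"
    using DERIV_chain2[OF has_real_derivative_powr[of "1 - x" t] inner] assms by simp
  show ?thesis
    unfolding phi_def phi_deriv_def using DERIV_add[OF first second] by (simp add: algebra_simps)
qed

lemma continuous_on_phi: "t > 0 \<Longrightarrow> continuous_on {0..1} (phi t)"
  unfolding phi_def by (intro continuous_intros continuous_on_powr') auto

lemma phi_mean_value:
  assumes "t > 0" "0 \<le> a" "a < b" "b \<le> 1"
  obtains z where "a < z" "z < b" "phi t b - phi t a = (b - a) * phi_deriv t z"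
proof -
  have "continuous_on {a..b} (phi t)"
    using continuous_on_subset[OF continuous_on_phi[OF assms(1)]] assms by auto
  moreover have "phi t differentiable at x" if "a < x" "x < b" for x
    using has_real_derivative_phi[of x t] that assms real_differentiable_def by force
  ultimately obtain l z where z: "a < z" "z < b" and l: "(phi t has_real_derivative l) (at z)"
      and "phi t b - phi t a = (b - a) * l"
    using MVT[OF assms(3)] by blast
  moreover have "l = phi_deriv t z"
    using z assms by (intro DERIV_unique[OF l has_real_derivative_phi]) auto
  ultimately show ?thesis using that by blast
qed

lemma phi_deriv_nonneg_iff:
  assumes "0 < t" "0 < x" "x < 1"
  shows "0 \<le> phi_deriv t x \<longleftrightarrow> 0 \<le> psi t x"
proof -
  have "phi_deriv t x = t * (2 * exp ((2 * t - 1) * ln x) - exp ((t - 1) * ln (1 - x)))"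
    using assms by (simp add: phi_deriv_def powr_def algebra_simps)
  also have "2 * exp ((2 * t - 1) * ln x) = exp (ln 2 + (2 * t - 1) * ln x)"
    by (simp add: exp_add)
  finally have "0 \<le> phi_deriv t x \<longleftrightarrow> exp ((t - 1) * ln (1 - x)) \<le> exp (ln 2 + (2 * t - 1) * ln x)"
    using assms by (simp add: zero_le_mult_iff)
  then show ?thesis by (simp add: psi_def algebra_simps)
qed

lemma concave_on_ln_one_minus: "concave_on {..<1} (\<lambda>x::real. ln (1 - x))"
proof (rule concave_on_linorderI)
  fix s x y :: real
  assume "0 < s" "s < 1" "x \<in> {..<1}" "y \<in> {..<1}"
  then have "(1 - s) * ln (1 - x) + s * ln (1 - y) \<le> ln ((1 - s) *\<^sub>R (1 - x) + s *\<^sub>R (1 - y))"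
    by (intro concave_onD[OF ln_concave]) auto
  then show "(1 - s) * ln (1 - x) + s * ln (1 - y) \<le> ln (1 - ((1 - s) *\<^sub>R x + s *\<^sub>R y))"
    by (simp add: algebra_simps)
qed simp

lemma concave_on_subset: "concave_on T f \<Longrightarrow> S \<subseteq> T \<Longrightarrow> convex S \<Longrightarrow> concave_on S f"
  unfolding concave_on_def by (rule convex_on_subset)

lemma concave_on_psi:
  assumes "1/2 \<le> t" "t \<le> 1"
  shows "concave_on {0<..<1} (psi t)"
proof -
  have "concave_on {0<..<1} ln"
    by (rule concave_on_subset[OF ln_concave]) auto
  moreover have "concave_on {0<..<1} (\<lambda>x::real. ln (1 - x))"
    by (rule concave_on_subset[OF concave_on_ln_one_minus]) auto
  ultimately show ?thesis
    unfolding psi_def using assms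
    by (intro concave_on_add concave_on_cmul) (auto simp: concave_on_const)
qed

lemma tau_bounds:
  fixes m t :: real
  assumes "m \<ge> 2" "(1/m) powr (2*t) + ((m-1)/m) powr t = 1"
  shows "1/2 \<le> t" "t \<le> 1"
proof -
  have p: "0 < 1/m" "1/m < 1" and q: "0 < (m-1)/m" "(m-1)/m < 1" using assms by auto
  have one: "(1/m) powr 1 + ((m-1)/m) powr 1 = 1"
    using p q assms by (simp add: divide_simps)
  show "t \<le> 1"
  proof (rule ccontr)
    assume "\<not> t \<le> 1"
    then have "(1/m) powr (2*t) + ((m-1)/m) powr t < (1/m) powr 1 + ((m-1)/m) powr 1"
      by (intro add_strict_mono powr_less_mono'[OF p] powr_less_mono'[OF q]) auto
    then show False using assms(2) one by linarith
  qed
  show "1/2 \<le> t"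
  proof (rule ccontr)
    assume "\<not> 1/2 \<le> t"
    then have "(1/m) powr 1 + ((m-1)/m) powr 1 < (1/m) powr (2*t) + ((m-1)/m) powr t"
      by (intro add_strict_mono powr_less_mono'[OF p] powr_less_mono'[OF q]) auto
    then show False using assms(2) one by linarith
  qed
qed

(* phi t takes the value 1 at 0, 1/m and 1.  If it dipped below 1 at some x in (1/m, 1),
   three applications of the mean value theorem would give z0 < z1 < z2 with
   psi t z0 \<ge> 0, psi t z1 < 0 and psi t z2 \<ge> 0, contradicting the concavity of psi t. *)
lemma phi_ge_one:
  fixes m t x :: real
  assumes "m \<ge> 2" "t > 0" "(1/m) powr (2*t) + ((m-1)/m) powr t = 1"
    and "1/m \<le> x" "x \<le> 1"
  shows "1 \<le> phi t x"
proof (rule ccontr)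
  assume "\<not> 1 \<le> phi t x"
  then have "phi t x < 1" by simp
  have m: "0 < 1/m" "1/m < 1" using assms by auto
  have "phi t 0 = 1" "phi t 1 = 1" using assms by (simp_all add: phi_def)
  moreover have "phi t (1/m) = 1"
    using assms by (simp add: phi_def diff_divide_distrib)
  ultimately have x: "1/m < x" "x < 1"
    using \<open>phi t x < 1\<close> assms(4,5) by (metis order_less_irrefl order.not_eq_order_implies_strict)+
  obtain z0 where z0: "0 < z0" "z0 < 1/m" "phi t (1/m) - phi t 0 = (1/m) * phi_deriv t z0"
    using phi_mean_value[OF assms(2), of 0 "1/m"] m by auto
  obtain z1 where z1: "1/m < z1" "z1 < x" "phi t x - phi t (1/m) = (x - 1/m) * phi_deriv t z1"
    using phi_mean_value[OF assms(2), of "1/m" x] m x by auto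
  obtain z2 where z2: "x < z2" "z2 < 1" "phi t 1 - phi t x = (1 - x) * phi_deriv t z2"
    using phi_mean_value[OF assms(2), of x 1] m x by auto
  have "0 \<le> psi t z0"
    using z0 m less_trans[OF z0(2) m(2)] \<open>phi t 0 = 1\<close> \<open>phi t (1/m) = 1\<close>
      phi_deriv_nonneg_iff[OF assms(2), of z0]
    by simp
  moreover have "psi t z1 < 0"
  proof -
    have "(x - 1/m) * phi_deriv t z1 < 0"
      using z1(3) \<open>phi t x < 1\<close> \<open>phi t (1/m) = 1\<close> by simp
    then have "phi_deriv t z1 < 0" using x by (simp add: mult_less_0_iff)
    then show ?thesis using phi_deriv_nonneg_iff[OF assms(2), of z1] z1 x m by linarith
  qed
  moreover have "0 \<le> psi t z2"
  proof -
    have "0 < (1 - x) * phi_deriv t z2"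
      using z2(3) \<open>phi t x < 1\<close> \<open>phi t 1 = 1\<close> by simp
    then have "0 < phi_deriv t z2" using x by (simp add: zero_less_mult_iff)
    then show ?thesis using phi_deriv_nonneg_iff[OF assms(2), of z2] z2 x m by linarith
  qed
  moreover have "min (psi t z0) (psi t z2) \<le> psi t z1"
  proof (rule concave_on_ge_min[of z0 z2 "psi t" z1])
    show "concave_on {z0..z2} (psi t)"
      by (rule concave_on_subset[OF concave_on_psi[OF tau_bounds[OF assms(1,3)]]])
        (use z0 z2 in auto)
  qed (use z0 z1 z2 in auto)
  ultimately show False by linarith
qed

lemma powr_double: "x powr (2 * t) = (x * x :: real) powr t"
  by (simp add: powr_mult powr_add[symmetric])

lemma powr_split_le:
  fixes a b c d t :: real
  assumes a: "0 < a" and b: "0 < b" and c: "0 \<le> c" "c \<le> a" and d: "0 \<le> d"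
    and ratio: "c * b \<le> d * a" and t: "0 \<le> t" and phi: "1 \<le> phi t (c / a)"
  shows "(a * b) powr t \<le> (c * d) powr t + ((a - c) * b) powr t"
proof -
  define x y where "x = c / a" and "y = d / b"
  have x: "0 \<le> x" "x \<le> 1" "x \<le> y"
    using a b c ratio by (auto simp: x_def y_def divide_simps mult.commute)
  have cd: "c * d = (x * y) * (a * b)" and ab: "(a - c) * b = (1 - x) * (a * b)"
    using a b by (simp_all add: x_def y_def algebra_simps)
  have "(a * b) powr t \<le> phi t x * (a * b) powr t"
    using mult_right_mono[OF phi, of "(a * b) powr t"] by (simp add: x_def)
  also have "\<dots> = (x * x) powr t * (a * b) powr t + (1 - x) powr t * (a * b) powr t"
    using x by (simp add: phi_def powr_double distrib_right)
  also have "\<dots> \<le> (x * y) powr t * (a * b) powr t + (1 - x) powr t * (a * b) powr t"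
    using x t by (intro add_right_mono mult_right_mono powr_mono2 mult_left_mono) auto
  also have "\<dots> = (c * d) powr t + ((a - c) * b) powr t"
    by (simp add: cd ab powr_mult)
  finally show ?thesis .
qed

lemma card_powr_split_le:
  fixes c c0 d d0 :: nat and M :: int and t :: real
  assumes t: "0 < t" and phi: "\<And>x. 1 / real_of_int M \<le> x \<Longrightarrow> x \<le> 1 \<Longrightarrow> 1 \<le> phi t x"
    and bottom: "c \<le> nat M * c0" and c0: "0 < c0" "c0 \<le> c" and d: "0 < d"
    and ratio: "c0 * d \<le> d0 * c"
  shows "(real c * real d) powr t \<le> (real c0 * real d0) powr t + ((real c - real c0) * real d) powr t"
proof -
  have "0 < c" using c0 by simp
  then have "0 < nat M * c0" using bottom by linarith
  then have "0 < M" by simp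
  have "real c \<le> real (nat M * c0)"
    using bottom by (simp only: of_nat_le_iff)
  also have "\<dots> = real_of_int M * real c0"
    using \<open>0 < M\<close> by simp
  finally have "1 / real_of_int M \<le> real c0 / real c"
    using \<open>0 < c\<close> \<open>0 < M\<close> by (simp add: le_divide_eq divide_le_eq algebra_simps)
  moreover have "real c0 / real c \<le> 1"
    using \<open>0 < c\<close> c0 by (simp add: divide_le_eq_1)
  ultimately have "1 \<le> phi t (real c0 / real c)"
    by (rule phi)
  moreover have "real c0 * real d \<le> real d0 * real c"
    using ratio by (simp only: flip: of_nat_mult of_nat_le_iff)
  ultimately show ?thesis
    using \<open>0 < c\<close> d c0 t by (intro powr_split_le) simp_all
qed

section \<open>Compression along a coordinate\<close>

definition set_coord :: "'r::finite \<Rightarrow> int \<Rightarrow> int ^ 'r \<Rightarrow> int ^ 'r" where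
  "set_coord k t x = (\<chi> i. if i = k then t else x $ i)"

definition fibre :: "(int ^ 'r::finite) set \<Rightarrow> 'r \<Rightarrow> int ^ 'r \<Rightarrow> int set" where
  "fibre A k x = {t. set_coord k t x \<in> A}"

definition compress :: "'r::finite \<Rightarrow> (int ^ 'r) set \<Rightarrow> (int ^ 'r) set" where
  "compress k A = {x. 0 \<le> x $ k \<and> x $ k < int (card (fibre A k x))}"

definition coord_support :: "(int ^ 'r::finite) set \<Rightarrow> 'r set" where
  "coord_support A = {k. \<exists>x\<in>A. x $ k \<noteq> 0}"

lemma finite_cube: "finite (cube M :: (int ^ 'r::finite) set)"
proof -
  have "(cube M :: (int ^ 'r) set) \<subseteq> vec_lambda ` (PiE UNIV (\<lambda>_. {0..<M}))"
    by (auto simp: cube_def intro!: image_eqI[where x = "\<lambda>i. _ $ i"])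
  then show ?thesis
    by (rule finite_subset) (intro finite_imageI finite_PiE; simp)
qed

lemma set_coord_nth: "set_coord k t x $ i = (if i = k then t else x $ i)"
  by (simp add: set_coord_def)

lemma set_coord_nth_same [simp]: "set_coord k t x $ k = t"
  by (simp add: set_coord_def)

lemma set_coord_self [simp]: "set_coord k (x $ k) x = x"
  by (simp add: set_coord_def vec_eq_iff)

lemma set_coord_set_coord [simp]: "set_coord k s (set_coord k t x) = set_coord k s x"
  by (simp add: set_coord_def vec_eq_iff)

lemma set_coord_add: "set_coord k s x + set_coord k t y = set_coord k (s + t) (x + y)"
  by (simp add: set_coord_def vec_eq_iff)

lemma inj_set_coord: "inj (\<lambda>t. set_coord k t x)"
  by (rule injI) (metis set_coord_nth_same)

lemma fibre_set_coord [simp]: "fibre A k (set_coord k t x) = fibre A k x"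
  by (simp add: fibre_def)

lemma finite_fibre: "finite A \<Longrightarrow> finite (fibre A k x)"
  unfolding fibre_def using finite_vimageI[OF _ inj_set_coord] by (simp add: vimage_def)

lemma card_fibre_le: "finite A \<Longrightarrow> card (fibre A k x) \<le> card A"
  unfolding fibre_def
  by (rule card_inj_on_le[OF inj_on_subset[OF inj_set_coord]]) auto

lemma fibre_subset_cube:
  assumes "A \<subseteq> cube M"
  shows "fibre A k x \<subseteq> {0..<M}"
proof
  fix t assume "t \<in> fibre A k x"
  then have "set_coord k t x \<in> cube M" using assms by (auto simp: fibre_def)
  then show "t \<in> {0..<M}"
    unfolding cube_def by (metis (mono_tags) atLeastLessThan_iff mem_Collect_eq set_coord_nth_same)
qed

lemma card_fibre_cube: "A \<subseteq> cube M \<Longrightarrow> card (fibre A k x) \<le> nat M"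
  using card_mono[OF finite_atLeastLessThan_int fibre_subset_cube] by simp

lemma card_eq_sum_card_fibre:
  assumes "finite A"
  shows "card A = (\<Sum>w \<in> set_coord k 0 ` A. card (fibre A k w))"
proof -
  let ?f = "\<lambda>x. (set_coord k 0 x, x $ k)"
  have "inj_on ?f A"
    by (rule inj_on_inverseI[where g = "\<lambda>(w, t). set_coord k t w"]) simp
  moreover have "?f ` A = (SIGMA w : set_coord k 0 ` A. fibre A k w)"
  proof
    show "?f ` A \<subseteq> (SIGMA w : set_coord k 0 ` A. fibre A k w)"
      by (intro image_subsetI SigmaI imageI) (simp_all add: fibre_def)
    show "(SIGMA w : set_coord k 0 ` A. fibre A k w) \<subseteq> ?f ` A"
    proof clarify
      fix a t assume "a \<in> A" "t \<in> fibre A k (set_coord k 0 a)"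
      then have "set_coord k t a \<in> A" by (simp add: fibre_def)
      then show "(set_coord k 0 a, t) \<in> ?f ` A"
        by (intro image_eqI[where x = "set_coord k t a"]) simp_all
    qed
  qed
  ultimately have "card A = card (SIGMA w : set_coord k 0 ` A. fibre A k w)"
    by (metis card_image)
  also have "\<dots> = (\<Sum>w \<in> set_coord k 0 ` A. card (fibre A k w))"
    by (rule card_SigmaI) (simp_all add: assms finite_fibre)
  finally show ?thesis .
qed

lemma compress_memD:
  assumes "x \<in> compress k A"
  obtains s where "set_coord k s x \<in> A"
proof -
  have "0 < card (fibre A k x)" using assms by (simp add: compress_def)
  then obtain s where "s \<in> fibre A k x" by (metis card_gt_0_iff ex_in_conv)
  then show ?thesis using that by (simp add: fibre_def)
qed

lemma fibre_compress: "fibre (compress k A) k x = {0..<int (card (fibre A k x))}"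
  by (auto simp: fibre_def compress_def)

lemma finite_compress:
  assumes "finite A"
  shows "finite (compress k A)"
proof -
  have "compress k A \<subseteq> (\<lambda>(t, a). set_coord k t a) ` ({0..<int (card A)} \<times> A)"
  proof
    fix x assume x: "x \<in> compress k A"
    then obtain s where "set_coord k s x \<in> A" by (rule compress_memD)
    moreover have "x $ k \<in> {0..<int (card A)}"
      using x card_fibre_le[OF assms, of k x] by (auto simp: compress_def)
    ultimately show "x \<in> (\<lambda>(t, a). set_coord k t a) ` ({0..<int (card A)} \<times> A)"
      by (intro image_eqI[where x = "(x $ k, set_coord k s x)"]) simp_all
  qed
  then show ?thesis using assms finite_subset by blast
qed

lemma image_set_coord_compress:
  assumes "finite A"
  shows "set_coord k 0 ` compress k A = set_coord k 0 ` A"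
proof
  show "set_coord k 0 ` compress k A \<subseteq> set_coord k 0 ` A"
  proof clarify
    fix x assume "x \<in> compress k A"
    then obtain s where "set_coord k s x \<in> A" by (rule compress_memD)
    then show "set_coord k 0 x \<in> set_coord k 0 ` A" by (metis image_eqI set_coord_set_coord)
  qed
  show "set_coord k 0 ` A \<subseteq> set_coord k 0 ` compress k A"
  proof
    fix z assume "z \<in> set_coord k 0 ` A"
    then obtain a where a: "a \<in> A" "z = set_coord k 0 a" by blast
    then have "a $ k \<in> fibre A k a" by (simp add: fibre_def)
    then have "z \<in> compress k A"
      using a finite_fibre[OF assms] by (auto simp: compress_def card_gt_0_iff)
    then show "z \<in> set_coord k 0 ` compress k A"
      using a by (metis image_eqI set_coord_set_coord)
  qed
qed

lemma card_compress: "finite A \<Longrightarrow> card (compress k A) = card A"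
  by (simp add: card_eq_sum_card_fibre[of A k] card_eq_sum_card_fibre[OF finite_compress, of A k k]
      image_set_coord_compress fibre_compress)

lemma compress_subset_cube:
  assumes "A \<subseteq> cube M"
  shows "compress k A \<subseteq> cube M"
proof
  fix x assume x: "x \<in> compress k A"
  then obtain s where "set_coord k s x \<in> cube M" using assms by (meson compress_memD subsetD)
  then have "0 \<le> x $ i \<and> x $ i < M" if "i \<noteq> k" for i
    using that by (auto simp: cube_def set_coord_nth dest: spec[where x = i])
  moreover have "0 \<le> x $ k \<and> x $ k < M"
    using x card_fibre_cube[OF assms, of k x] by (auto simp: compress_def)
  ultimately have "0 \<le> x $ i \<and> x $ i < M" for i by (cases "i = k") auto
  then show "x \<in> cube M" by (simp add: cube_def)
qed

lemma card_compress_le_bottom: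
  assumes "A \<subseteq> cube M"
  shows "card (compress k A) \<le> nat M * card {x \<in> compress k A. x $ k = 0}"
proof -
  let ?bottom = "{x \<in> compress k A. x $ k = 0}"
  have fin: "finite ?bottom"
    using finite_compress[OF finite_subset[OF assms finite_cube]] by simp
  have "compress k A \<subseteq> (\<lambda>(y, t). set_coord k t y) ` (?bottom \<times> {0..<M})"
  proof
    fix x assume x: "x \<in> compress k A"
    then have "set_coord k 0 x \<in> ?bottom" "x $ k \<in> {0..<M}"
      using compress_subset_cube[OF assms] by (auto simp: compress_def cube_def)
    then show "x \<in> (\<lambda>(y, t). set_coord k t y) ` (?bottom \<times> {0..<M})"
      by (intro image_eqI[where x = "(set_coord k 0 x, x $ k)"]) simp_all
  qed
  then have "card (compress k A) \<le> card ((\<lambda>(y, t). set_coord k t y) ` (?bottom \<times> {0..<M}))"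
    by (rule card_mono[rotated]) (use fin in simp)
  also have "\<dots> \<le> card (?bottom \<times> {0..<M})"
    by (rule card_image_le) (use fin in simp)
  finally have "card (compress k A) \<le> card (?bottom \<times> {0..<M})" .
  then show ?thesis by (simp add: card_cartesian_product mult.commute)
qed

lemma coord_support_compress: "coord_support (compress k A) - {k} \<subseteq> coord_support A"
proof
  fix i assume "i \<in> coord_support (compress k A) - {k}"
  then have "i \<in> coord_support (compress k A)" "i \<noteq> k" by auto
  then obtain x where x: "x \<in> compress k A" "x $ i \<noteq> 0" by (auto simp: coord_support_def)
  obtain s where "set_coord k s x \<in> A" using x(1) by (rule compress_memD)
  moreover have "set_coord k s x $ i = x $ i" using \<open>i \<noteq> k\<close> by (simp add: set_coord_nth)
  ultimately show "i \<in> coord_support A"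
    using x(2) unfolding coord_support_def by (intro CollectI bexI[of _ "set_coord k s x"]) simp_all
qed

section \<open>Sumsets of compressed sets\<close>

lemma sumset_eq_image: "sumset A B = (\<lambda>(a, b). a + b) ` (A \<times> B)"
  by (auto simp: sumset_def)

lemma finite_sumset: "finite A \<Longrightarrow> finite B \<Longrightarrow> finite (sumset A B)"
  by (simp add: sumset_eq_image)

lemma sumset_commute: "sumset A B = sumset B (A :: 'a::ab_semigroup_add set)"
  unfolding sumset_def by (auto; metis add.commute)

lemma card_sumset_int_ge:
  fixes X Y :: "int set"
  assumes "finite X" "finite Y" "X \<noteq> {}" "Y \<noteq> {}"
  shows "card X + card Y \<le> card (sumset X Y) + 1"
proof -
  let ?U = "(\<lambda>y. Min X + y) ` Y" and ?V = "(\<lambda>x. x + Max Y) ` X"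
  have "card ?U = card Y" "card ?V = card X" by (simp_all add: card_image)
  moreover have "?U \<union> ?V \<subseteq> sumset X Y"
    using assms Min_in Max_in by (auto simp: sumset_def)
  then have "card (?U \<union> ?V) \<le> card (sumset X Y)"
    using assms by (intro card_mono finite_sumset) auto
  moreover have UV: "?U \<inter> ?V \<subseteq> {Min X + Max Y}"
  proof
    fix z assume "z \<in> ?U \<inter> ?V"
    then obtain x y where "x \<in> X" "y \<in> Y" "z = Min X + y" "z = x + Max Y" by auto
    moreover have "y \<le> Max Y" "Min X \<le> x" using assms calculation by auto
    ultimately show "z \<in> {Min X + Max Y}" by auto
  qed
  then have "card (?U \<inter> ?V) \<le> 1"
    using card_mono[OF _ UV] by simp
  moreover have "card ?U + card ?V = card (?U \<union> ?V) + card (?U \<inter> ?V)"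
    using assms by (intro card_Un_Int) auto
  ultimately show ?thesis by linarith
qed

lemma sumset_fibre_subset: "sumset (fibre A k x) (fibre B k y) \<subseteq> fibre (sumset A B) k (x + y)"
proof
  fix z assume "z \<in> sumset (fibre A k x) (fibre B k y)"
  then obtain s u where "set_coord k s x \<in> A" "set_coord k u y \<in> B" "z = s + u"
    by (auto simp: sumset_def fibre_def)
  moreover have "set_coord k z (x + y) = set_coord k s x + set_coord k u y"
    using \<open>z = s + u\<close> by (simp add: set_coord_add)
  ultimately have "set_coord k z (x + y) \<in> sumset A B"
    unfolding sumset_def by blast
  then show "z \<in> fibre (sumset A B) k (x + y)" by (simp add: fibre_def)
qed

lemma image_set_coord_sumset:
  fixes A B :: "(int ^ 'r::finite) set"
  shows "set_coord k 0 ` sumset A B = sumset (set_coord k 0 ` A) (set_coord k 0 ` B)"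
proof -
  have add: "set_coord k 0 (a + b) = set_coord k 0 a + set_coord k 0 b" for a b :: "int ^ 'r"
    using set_coord_add[of k 0 a 0 b] by simp
  show ?thesis
  proof
    show "set_coord k 0 ` sumset A B \<subseteq> sumset (set_coord k 0 ` A) (set_coord k 0 ` B)"
    proof
      fix z assume "z \<in> set_coord k 0 ` sumset A B"
      then obtain a b where "a \<in> A" "b \<in> B" "z = set_coord k 0 a + set_coord k 0 b"
        by (auto simp: sumset_def add)
      then show "z \<in> sumset (set_coord k 0 ` A) (set_coord k 0 ` B)"
        by (auto simp: sumset_def)
    qed
    show "sumset (set_coord k 0 ` A) (set_coord k 0 ` B) \<subseteq> set_coord k 0 ` sumset A B"
    proof
      fix z assume "z \<in> sumset (set_coord k 0 ` A) (set_coord k 0 ` B)"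
      then obtain a b where "a \<in> A" "b \<in> B" "z = set_coord k 0 a + set_coord k 0 b"
        by (auto simp: sumset_def)
      then show "z \<in> set_coord k 0 ` sumset A B"
        by (intro image_eqI[where x = "a + b"]) (unfold sumset_def add, blast+)
    qed
  qed
qed

lemma card_fibre_sumset_compress_le:
  assumes "finite A" "finite B"
  shows "card (fibre (sumset (compress k A) (compress k B)) k w) \<le> card (fibre (sumset A B) k w)"
proof -
  have "fibre (sumset (compress k A) (compress k B)) k w \<subseteq> {0..<int (card (fibre (sumset A B) k w))}"
  proof
    fix t assume "t \<in> fibre (sumset (compress k A) (compress k B)) k w"
    then obtain a b where a: "a \<in> compress k A" and b: "b \<in> compress k B"
      and ab: "set_coord k t w = a + b"
      by (auto simp: fibre_def sumset_def)
    let ?X = "fibre A k a" and ?Y = "fibre B k b"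
    have bounds: "0 \<le> a $ k" "a $ k < card ?X" "0 \<le> b $ k" "b $ k < card ?Y"
      using a b by (auto simp: compress_def)
    have "t = a $ k + b $ k" using arg_cong[OF ab, of "\<lambda>v. v $ k"] by simp
    have "card ?X + card ?Y \<le> card (sumset ?X ?Y) + 1"
      using bounds assms by (intro card_sumset_int_ge finite_fibre) auto
    also have "card (sumset ?X ?Y) \<le> card (fibre (sumset A B) k w)"
    proof (rule card_mono)
      show "finite (fibre (sumset A B) k w)" by (intro finite_fibre finite_sumset assms)
      have "fibre (sumset A B) k (a + b) = fibre (sumset A B) k w"
        by (metis ab fibre_set_coord)
      then show "sumset ?X ?Y \<subseteq> fibre (sumset A B) k w"
        using sumset_fibre_subset[of A k a B b] by simp
    qed
    finally show "t \<in> {0..<int (card (fibre (sumset A B) k w))}"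
      using bounds \<open>t = a $ k + b $ k\<close> by simp
  qed
  from card_mono[OF finite_atLeastLessThan_int this] show ?thesis by simp
qed

lemma card_sumset_compress_le:
  assumes "finite A" "finite B"
  shows "card (sumset (compress k A) (compress k B)) \<le> card (sumset A B)"
proof -
  let ?S = "sumset A B" and ?T = "sumset (compress k A) (compress k B)"
  have fin: "finite ?S" "finite ?T" by (simp_all add: assms finite_sumset finite_compress)
  have image: "set_coord k 0 ` ?T = set_coord k 0 ` ?S"
    by (simp add: image_set_coord_sumset image_set_coord_compress assms)
  have "card ?T = (\<Sum>w \<in> set_coord k 0 ` ?T. card (fibre ?T k w))"
    by (rule card_eq_sum_card_fibre[OF fin(2)])
  also have "\<dots> \<le> (\<Sum>w \<in> set_coord k 0 ` ?S. card (fibre ?S k w))"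
    unfolding image by (intro sum_mono card_fibre_sumset_compress_le assms)
  also have "\<dots> = card ?S"
    by (rule card_eq_sum_card_fibre[OF fin(1), symmetric])
  finally show ?thesis .
qed

lemma card_sumset_split_le:
  fixes C D :: "(int ^ 'r::finite) set"
  assumes "finite C" "finite D" "\<forall>x\<in>C. 0 \<le> x $ k" "\<forall>x\<in>D. 0 \<le> x $ k"
  shows "card (sumset {x \<in> C. x $ k = 0} {x \<in> D. x $ k = 0}) + card (sumset {x \<in> C. x $ k \<noteq> 0} D)
    \<le> card (sumset C D)"
proof -
  let ?U = "sumset {x \<in> C. x $ k = 0} {x \<in> D. x $ k = 0}" and ?V = "sumset {x \<in> C. x $ k \<noteq> 0} D"
  have U: "z $ k = 0" if z: "z \<in> ?U" for z
  proof -
    obtain c d where "c $ k = 0" "d $ k = 0" "z = c + d"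
      using z unfolding sumset_def by blast
    then show ?thesis by simp
  qed
  have V: "0 < z $ k" if z: "z \<in> ?V" for z
  proof -
    obtain c d where "c \<in> C" "c $ k \<noteq> 0" "d \<in> D" "z = c + d"
      using z unfolding sumset_def by blast
    moreover have "0 \<le> c $ k" "0 \<le> d $ k" using assms(3,4) calculation by blast+
    ultimately show ?thesis by simp
  qed
  have "?U \<inter> ?V = {}"
  proof (rule equals0I)
    fix z assume "z \<in> ?U \<inter> ?V"
    then show False using U[of z] V[of z] by simp
  qed
  moreover have "finite ?U" "finite ?V"
    using assms(1,2) by (simp_all add: finite_sumset)
  moreover have "?U \<union> ?V \<subseteq> sumset C D"
    unfolding sumset_def by blast
  then have "card (?U \<union> ?V) \<le> card (sumset C D)"
    by (rule card_mono[OF finite_sumset[OF assms(1,2)]])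
  ultimately show ?thesis by (simp add: card_Un_disjoint)
qed

section \<open>The induction\<close>

lemma sumset_powr_bound_split:
  fixes C D :: "(int ^ 'r::finite) set" and t :: real
  assumes C: "C \<subseteq> cube M" and D: "D \<subseteq> cube M" and t: "0 < t"
    and phi: "\<And>x. 1 / real_of_int M \<le> x \<Longrightarrow> x \<le> 1 \<Longrightarrow> 1 \<le> phi t x"
    and bottom: "card C \<le> nat M * card {x \<in> C. x $ k = 0}"
    and top: "\<exists>x\<in>C. x $ k \<noteq> 0"
    and ratio: "card {x \<in> C. x $ k = 0} * card D \<le> card {x \<in> D. x $ k = 0} * card C"
    and IH: "\<And>P Q :: (int ^ 'r) set. P \<subseteq> cube M \<Longrightarrow> Q \<subseteq> cube M \<Longrightarrow>
      card P + card Q < card C + card D \<Longrightarrow>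
      (real (card P) * real (card Q)) powr t \<le> real (card (sumset P Q))"
  shows "(real (card C) * real (card D)) powr t \<le> real (card (sumset C D))"
proof (cases "D = {}")
  case False
  define C0 C1 D0 where "C0 = {x \<in> C. x $ k = 0}" and "C1 = {x \<in> C. x $ k \<noteq> 0}"
    and "D0 = {x \<in> D. x $ k = 0}"
  have fin: "finite C" "finite D" using C D finite_cube finite_subset by blast+
  have card_C: "card C = card C0 + card C1"
  proof -
    have "C = C0 \<union> C1" "C0 \<inter> C1 = {}" "finite C0" "finite C1"
      using fin by (auto simp: C0_def C1_def)
    then show ?thesis using card_Un_disjoint[of C0 C1] by simp
  qed
  have "0 < card C1" using top fin by (auto simp: C1_def card_gt_0_iff)
  then have "0 < nat M * card C0" using bottom card_C unfolding C0_def by linarith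
  then have "0 < card C0" by simp
  have "card D0 \<le> card D" unfolding D0_def using fin by (intro card_mono) auto
  have "(real (card C0) * real (card D0)) powr t \<le> real (card (sumset C0 D0))"
  proof (rule IH)
    show "C0 \<subseteq> cube M" "D0 \<subseteq> cube M" using C D by (auto simp: C0_def D0_def)
    show "card C0 + card D0 < card C + card D"
      using \<open>0 < card C1\<close> \<open>card D0 \<le> card D\<close> card_C by linarith
  qed
  moreover have "(real (card C1) * real (card D)) powr t \<le> real (card (sumset C1 D))"
  proof (rule IH)
    show "C1 \<subseteq> cube M" using C by (auto simp: C1_def)
    show "card C1 + card D < card C + card D" using \<open>0 < card C0\<close> card_C by linarith
  qed (rule D)
  moreover have "\<forall>x\<in>C. 0 \<le> x $ k" "\<forall>x\<in>D. 0 \<le> x $ k"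
    using C D unfolding cube_def by blast+
  then have "card (sumset C0 D0) + card (sumset C1 D) \<le> card (sumset C D)"
    unfolding C0_def C1_def D0_def by (rule card_sumset_split_le[OF fin])
  moreover have "(real (card C) * real (card D)) powr t
      \<le> (real (card C0) * real (card D0)) powr t + ((real (card C) - real (card C0)) * real (card D)) powr t"
    using bottom ratio \<open>0 < card C0\<close> card_C False fin
    by (intro card_powr_split_le[OF t phi]) (simp_all add: C0_def D0_def card_gt_0_iff)
  ultimately show ?thesis using card_C by simp
qed simp

lemma bottom_layer_cases:
  fixes C D :: "(int ^ 'r::finite) set"
  assumes "finite C" "finite D" "C \<noteq> {}" "D \<noteq> {}"
  obtains (left) "\<exists>x\<in>C. x $ k \<noteq> 0"
      "card {x \<in> C. x $ k = 0} * card D \<le> card {x \<in> D. x $ k = 0} * card C"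
    | (right) "\<exists>x\<in>D. x $ k \<noteq> 0"
      "card {x \<in> D. x $ k = 0} * card C \<le> card {x \<in> C. x $ k = 0} * card D"
    | (flat) "\<forall>x\<in>C \<union> D. x $ k = 0"
proof -
  have top_or_flat: "(\<exists>x\<in>X. x $ k \<noteq> 0) \<or> (\<forall>x\<in>X \<union> Y. x $ k = 0)"
    if "card {x \<in> X. x $ k = 0} * card Y \<le> card {x \<in> Y. x $ k = 0} * card X"
      "finite X" "finite Y" "X \<noteq> {}" for X Y :: "(int ^ 'r) set"
  proof (cases "\<exists>x\<in>X. x $ k \<noteq> 0")
    case False
    then have "{x \<in> X. x $ k = 0} = X" by auto
    then have "card Y \<le> card {x \<in> Y. x $ k = 0}"
      using that by (simp add: card_gt_0_iff)
    moreover have sub: "{x \<in> Y. x $ k = 0} \<subseteq> Y" by blast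
    ultimately have "card {x \<in> Y. x $ k = 0} = card Y"
      using card_mono[OF that(3) sub] by linarith
    then have "{x \<in> Y. x $ k = 0} = Y" by (rule card_subset_eq[OF that(3) sub])
    then show ?thesis using False by blast
  qed simp
  show ?thesis
  proof (cases "card {x \<in> C. x $ k = 0} * card D \<le> card {x \<in> D. x $ k = 0} * card C")
    case True
    then show ?thesis using top_or_flat[OF True assms(1,2,3)] that by blast
  next
    case False
    then have ratio: "card {x \<in> D. x $ k = 0} * card C \<le> card {x \<in> C. x $ k = 0} * card D"
      by simp
    from top_or_flat[OF ratio assms(2,1,4)] show ?thesis
      using that ratio by (auto simp: Un_commute)
  qed
qed

lemma coord_support_compress_flat:
  assumes "\<forall>x\<in>compress k A \<union> compress k B. x $ k = 0"
  shows "coord_support (compress k A \<union> compress k B) \<subseteq> coord_support (A \<union> B) - {k}"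
proof
  fix i assume i: "i \<in> coord_support (compress k A \<union> compress k B)"
  then have "i \<noteq> k" using assms by (auto simp: coord_support_def)
  moreover have "i \<in> coord_support (compress k A) \<union> coord_support (compress k B)"
    using i by (auto simp: coord_support_def)
  ultimately have "i \<in> coord_support A \<union> coord_support B"
    using coord_support_compress[of k A] coord_support_compress[of k B] by auto
  then show "i \<in> coord_support (A \<union> B) - {k}"
    using \<open>i \<noteq> k\<close> by (auto simp: coord_support_def)
qed

lemma sumset_powr_bound_step:
  fixes A B :: "(int ^ 'r::finite) set" and t :: real
  assumes A: "A \<subseteq> cube M" and B: "B \<subseteq> cube M" and t: "0 < t"
    and phi: "\<And>x. 1 / real_of_int M \<le> x \<Longrightarrow> x \<le> 1 \<Longrightarrow> 1 \<le> phi t x"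
    and k: "k \<in> coord_support (A \<union> B)" and "A \<noteq> {}" "B \<noteq> {}"
    and smaller: "\<And>P Q :: (int ^ 'r) set. card P + card Q < card A + card B \<Longrightarrow>
      P \<subseteq> cube M \<Longrightarrow> Q \<subseteq> cube M \<Longrightarrow>
      (real (card P) * real (card Q)) powr t \<le> real (card (sumset P Q))"
    and narrower: "\<And>P Q :: (int ^ 'r) set. card P + card Q = card A + card B \<Longrightarrow>
      card (coord_support (P \<union> Q)) < card (coord_support (A \<union> B)) \<Longrightarrow>
      P \<subseteq> cube M \<Longrightarrow> Q \<subseteq> cube M \<Longrightarrow>
      (real (card P) * real (card Q)) powr t \<le> real (card (sumset P Q))"
  shows "(real (card A) * real (card B)) powr t \<le> real (card (sumset A B))"
proof -
  define C D where "C = compress k A" and "D = compress k B"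
  have fin: "finite A" "finite B" using A B finite_cube finite_subset by blast+
  have C: "C \<subseteq> cube M" and D: "D \<subseteq> cube M"
    using A B by (simp_all add: C_def D_def compress_subset_cube)
  have cards: "card C = card A" "card D = card B"
    using fin by (simp_all add: C_def D_def card_compress)
  have fin_CD: "finite C" "finite D" using C D finite_cube finite_subset by blast+
  then have "C \<noteq> {}" "D \<noteq> {}" using \<open>A \<noteq> {}\<close> \<open>B \<noteq> {}\<close> fin cards by auto
  have bottom: "card C \<le> nat M * card {x \<in> C. x $ k = 0}"
      "card D \<le> nat M * card {x \<in> D. x $ k = 0}"
    using card_compress_le_bottom[OF A] card_compress_le_bottom[OF B]
    by (simp_all add: C_def D_def)
  have IH_CD: "(real (card P) * real (card Q)) powr t \<le> real (card (sumset P Q))"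
    if "P \<subseteq> cube M" "Q \<subseteq> cube M" "card P + card Q < card C + card D"
    for P Q :: "(int ^ 'r) set"
    by (rule smaller) (use that cards in simp_all)
  have IH_DC: "(real (card P) * real (card Q)) powr t \<le> real (card (sumset P Q))"
    if "P \<subseteq> cube M" "Q \<subseteq> cube M" "card P + card Q < card D + card C"
    for P Q :: "(int ^ 'r) set"
    by (rule smaller) (use that cards in simp_all)
  have "(real (card C) * real (card D)) powr t \<le> real (card (sumset C D))"
  proof (cases rule: bottom_layer_cases[OF fin_CD \<open>C \<noteq> {}\<close> \<open>D \<noteq> {}\<close>, of k,
        case_names left right flat])
    case left
    show ?thesis
      by (rule sumset_powr_bound_split[OF C D t phi bottom(1) left IH_CD])
  next
    case right
    have "(real (card D) * real (card C)) powr t \<le> real (card (sumset D C))"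
      by (rule sumset_powr_bound_split[OF D C t phi bottom(2) right IH_DC])
    then show ?thesis by (simp add: sumset_commute mult.commute)
  next
    case flat
    then have "coord_support (C \<union> D) \<subset> coord_support (A \<union> B)"
      using coord_support_compress_flat[of k A B] k by (auto simp: C_def D_def)
    then have "card (coord_support (C \<union> D)) < card (coord_support (A \<union> B))"
      by (intro psubset_card_mono) auto
    then show ?thesis using narrower[OF _ _ C D] cards by simp
  qed
  also have "\<dots> \<le> real (card (sumset A B))"
    using fin by (simp add: C_def D_def card_sumset_compress_le)
  finally show ?thesis using cards by simp
qed

lemma lex_measures_induct:
  fixes f g :: "'a \<Rightarrow> 'b \<Rightarrow> nat"
  assumes "\<And>A B. (\<And>C D. f C D < f A B \<Longrightarrow> P C D) \<Longrightarrow>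
      (\<And>C D. f C D = f A B \<Longrightarrow> g C D < g A B \<Longrightarrow> P C D) \<Longrightarrow> P A B"
  shows "P A B"
proof -
  have "P (fst z) (snd z)" for z
    by (induction z rule: wf_induct_rule[OF wf_measures[of
          "[\<lambda>z. f (fst z) (snd z), \<lambda>z. g (fst z) (snd z)]"]])
      (rule assms; force)
  from this[of "(A, B)"] show ?thesis by simp
qed

lemma sumset_powr_bound_cube:
  fixes A B :: "(int ^ 'r::finite) set" and t :: real
  assumes t: "0 < t" and phi: "\<And>x. 1 / real_of_int M \<le> x \<Longrightarrow> x \<le> 1 \<Longrightarrow> 1 \<le> phi t x"
  shows "A \<subseteq> cube M \<Longrightarrow> B \<subseteq> cube M \<Longrightarrow>
    (real (card A) * real (card B)) powr t \<le> real (card (sumset A B))"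
proof (induction A B rule: lex_measures_induct[where f = "\<lambda>A B. card A + card B"
      and g = "\<lambda>A B. card (coord_support (A \<union> B))"])
  case (1 A B)
  consider "A = {} \<or> B = {}" | "A \<noteq> {}" "B \<noteq> {}" "coord_support (A \<union> B) = {}"
    | k where "A \<noteq> {}" "B \<noteq> {}" "k \<in> coord_support (A \<union> B)"
    by (metis ex_in_conv)
  then show ?case
  proof cases
    case 1
    then have "(real (card A) * real (card B)) powr t = 0" by auto
    then show ?thesis by (metis of_nat_0_le_iff)
  next
    case 2
    then have "x = 0" if "x \<in> A \<union> B" for x
      using that by (auto simp: coord_support_def vec_eq_iff)
    then have "A = {0}" "B = {0}" using 2 by blast+
    then show ?thesis by (simp add: sumset_def)
  next
    case (3 k)
    show ?thesis
      by (rule sumset_powr_bound_step[OF "1"(3,4) t phi "3"(3,1,2) "1"(1,2)])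
  qed
qed

theorem theorem5:
  fixes M :: int and tau :: real and A B :: "(int ^ 'r) set"
  assumes "M \<ge> 2"
    and "tau > 0"
    and "(1 / real_of_int M) powr (2 * tau) + ((real_of_int M - 1) / real_of_int M) powr tau = 1"
    and "A \<subseteq> cube M" and "B \<subseteq> cube M"
  shows "real (card (sumset A B)) \<ge> (real (card A) * real (card B)) powr tau"
proof -
  have "1 \<le> phi tau x" if "1 / real_of_int M \<le> x" "x \<le> 1" for x
    using phi_ge_one[of "real_of_int M" tau x] assms(1-3) that by simp
  then show ?thesis
    using sumset_powr_bound_cube[OF assms(2) _ assms(4,5)] by simp
qed

end
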